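(* $\widehat{R}_{3/3,4}=-x^*\approx 3.287278452$, where $x^*$ is the smallest real root of \[ x^9+12x^8+60x^7+120x^6-144x^5-1152x^4-1536x^3+1152x^2+2304x-1536=0. \] (The class $\widehat{\Pi}_{3/3,4}$ consists of exactly three functions $\frac{a_3z^3+a_2z^2+a_1z+1}{(1-az)^3}$, with $a$ ranging over the three real roots of $24a^3-36a^2+12a-1=0$. The value $-x^*$ is attained for $a$ the smallest root, approximately $0.1289$.)
   Context: A real rational function $\psi$ is always considered in lowest terms, as a smooth function on $\mathbb{R}$ minus its finitely many poles. It is absolutely monotonic at $x\in\mathbb{R}$ if $x$ is not a pole and $\psi^{(k)}(x)\ge 0$ for all integers $k\ge 0$. The radius of absolute monotonicity is $R(\psi)=\sup\big(\{r\in[0,\infty): \psi \text{ is absolutely monotonic at each point of } [-r,0]\}\cup\{0\}\big)\in[0,+\infty]$. $\widehat{\Pi}_{s/s,p}$ denotes the set of real rational functions $\psi(z)=P(z)/(1-az)^s$ with $P$ a real polynomial of degree at most $s$ and $a\in\mathbb{R}$, such that $\psi(z)-e^z=O(z^{p+1})$ as $z\to0$. Finally, $\widehat{R}_{s/s,p}=\sup\{R(\psi):\psi\in\widehat{\Pi}_{s/s,p}\}$. *)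

theory Defs
  imports "HOL-Analysis.Analysis" "HOL-Computational_Algebra.Polynomial_Factorial" "HOL-Computational_Algebra.Field_as_Ring"
    "HOL-Library.Landau_Symbols"
begin

definition ratfun :: "real poly \<Rightarrow> real poly \<Rightarrow> real \<Rightarrow> real" where
  "ratfun P Q x = poly (P div gcd P Q) x / poly (Q div gcd P Q) x"

definition is_pole :: "real poly \<Rightarrow> real poly \<Rightarrow> real \<Rightarrow> bool" where
  "is_pole P Q x \<longleftrightarrow> poly (Q div gcd P Q) x = 0"

definition abs_mono_at :: "real poly \<Rightarrow> real poly \<Rightarrow> real \<Rightarrow> bool" where
  "abs_mono_at P Q x \<longleftrightarrow> \<not> is_pole P Q x \<and> (\<forall>k::nat. (deriv ^^ k) (ratfun P Q) x \<ge> 0)"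

definition radius_am :: "real poly \<Rightarrow> real poly \<Rightarrow> ereal" where
  "radius_am P Q = Sup (ereal ` {r. r \<ge> 0 \<and> (\<forall>x\<in>{-r..0}. abs_mono_at P Q x)} \<union> {0})"

definition den :: "real \<Rightarrow> nat \<Rightarrow> real poly" where
  "den a s = [:1, -a:] ^ s"

text \<open>The class of pairs (P, a) representing P(z)/(1-az)^s with deg P \<le> s and order p.\<close>
definition Pi_hat :: "nat \<Rightarrow> nat \<Rightarrow> (real poly \<times> real) set" where
  "Pi_hat s p = {(P, a). degree P \<le> s \<and>
     (\<lambda>z. ratfun P (den a s) z - exp z) \<in> O[at 0](\<lambda>z. z ^ (p + 1))}"

definition R_hat :: "nat \<Rightarrow> nat \<Rightarrow> ereal" where
  "R_hat s p = Sup ((\<lambda>(P, a). radius_am P (den a s)) ` Pi_hat s p)"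

end

theory Submission
  imports Defs "HOL-Real_Asymp.Real_Asymp"
begin

text \<open>
  Since \<open>e\<^sup>z (1 - a z)\<^sup>3\<close> must agree with the numerator \<open>P\<close> up to order 4, the coefficients of
  \<open>P\<close> are forced and the fifth Taylor coefficient gives \<open>24a\<^sup>3 - 36a\<^sup>2 + 12a - 1 = 0\<close>, so the
  class consists of three functions \<open>\<psi>\<^sub>a\<close>. For such \<open>a\<close>,
  \<open>\<psi>\<^sub>a = c\<^sub>0 + c\<^sub>1 w + c\<^sub>2 w\<^sup>2 + c\<^sub>3 w\<^sup>3\<close> with \<open>w = 1/(1 - a z)\<close>, and for \<open>k \<ge> 1\<close> the \<open>k\<close>-th
  derivative is \<open>a\<^sup>k k! w\<^sup>k\<^sup>+\<^sup>1\<close> times a quadratic in \<open>w\<close>. For the smallest root \<open>a \<approx> 0.1289\<close>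
  that quadratic is nonnegative for \<open>w \<ge> 0.7\<close>, which covers all \<open>z \<in> [-3.29, 0]\<close>, so
  absolute monotonicity reduces to \<open>P(z) \<ge> 0\<close>; as \<open>P\<close> is increasing, the radius is minus its
  real zero \<open>\<xi> \<approx> -3.287\<close>. For the other two roots a single derivative is already negative
  at \<open>0\<close> resp. \<open>-1\<close>. Finally \<open>\<xi>\<close> is the smallest root of the resultant of the cubic and
  \<open>P\<close>, which is the given polynomial of degree 9.
\<close>

section \<open>Rational functions, higher derivatives and the radius\<close>

lemma poly_div_gcd_nonzero:
  fixes P Q :: "real poly"
  assumes "poly Q x \<noteq> 0"
  shows "poly (Q div gcd P Q) x \<noteq> 0" and "poly (gcd P Q) x \<noteq> 0"
proof -
  have "poly Q x = poly (Q div gcd P Q) x * poly (gcd P Q) x"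
    by (metis dvd_div_mult_self gcd_dvd2 poly_mult)
  then show "poly (Q div gcd P Q) x \<noteq> 0" "poly (gcd P Q) x \<noteq> 0"
    using assms by auto
qed

lemma not_is_pole_if_poly_nonzero: "poly Q x \<noteq> 0 \<Longrightarrow> \<not> is_pole P Q x"
  by (simp add: is_pole_def poly_div_gcd_nonzero)

lemma ratfun_eq_divide:
  assumes "poly Q x \<noteq> 0"
  shows "ratfun P Q x = poly P x / poly Q x"
proof -
  have "poly P x = poly (P div gcd P Q) x * poly (gcd P Q) x"
    by (metis dvd_div_mult_self gcd_dvd1 poly_mult)
  moreover have "poly Q x = poly (Q div gcd P Q) x * poly (gcd P Q) x"
    by (metis dvd_div_mult_self gcd_dvd2 poly_mult)
  ultimately show ?thesis
    using poly_div_gcd_nonzero[OF assms] by (simp add: ratfun_def)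
qed

lemma poly_den: "poly (den a s) x = (1 - a*x)^s"
  by (simp add: den_def poly_power algebra_simps)

lemma ratfun_den_eq_divide: "a * x \<noteq> 1 \<Longrightarrow> ratfun P (den a s) x = poly P x / (1 - a*x)^s"
  by (simp add: ratfun_eq_divide poly_den)

lemma higher_deriv_eqI:
  assumes "open S" and "x \<in> S"
    and "\<And>k y. y \<in> S \<Longrightarrow> (f k has_real_derivative f (Suc k) y) (at y)"
  shows "(deriv ^^ k) (f 0) x = f k x"
  using assms(2)
proof (induction k arbitrary: x)
  case (Suc k)
  have "eventually (\<lambda>y. y \<in> S) (nhds x)"
    using assms(1) Suc.prems by (rule eventually_nhds_in_open)
  then have "eventually (\<lambda>y. (deriv ^^ k) (f 0) y = f k y) (nhds x)"
    by eventually_elim (rule Suc.IH)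
  then have "deriv ((deriv ^^ k) (f 0)) x = deriv (f k) x"
    by (rule deriv_cong_ev) simp
  also have "\<dots> = f (Suc k) x"
    using assms(3)[OF Suc.prems] by (rule DERIV_imp_deriv)
  finally show ?case by simp
qed simp

lemma higher_deriv_cong_open:
  assumes "open S" and "x \<in> S" and "\<And>y. y \<in> S \<Longrightarrow> f y = g y"
  shows "(deriv ^^ k) f x = (deriv ^^ k) g x"
  using assms(2)
proof (induction k arbitrary: x)
  case (Suc k)
  have "eventually (\<lambda>y. y \<in> S) (nhds x)"
    using assms(1) Suc.prems by (rule eventually_nhds_in_open)
  then have "eventually (\<lambda>y. (deriv ^^ k) f y = (deriv ^^ k) g y) (nhds x)"
    by eventually_elim (rule Suc.IH)
  then show ?case
    by (simp add: deriv_cong_ev)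
qed (simp add: assms(3))

lemma has_real_derivative_divide_power_linear:
  fixes a x K :: real
  assumes "a * x \<noteq> 1"
  shows "((\<lambda>y. K / (1 - a*y)^m) has_real_derivative K * (of_nat m * a) / (1 - a*x)^Suc m) (at x)"
proof -
  define u where "u = 1 - a*x"
  have u: "u \<noteq> 0" using assms by (simp add: u_def)
  have "((\<lambda>y. K / (1 - a*y)^m) has_real_derivative
        - (K * (of_nat m * u^(m - 1) * (0 - a*1))) / (u^m * u^m)) (at x)"
    using u unfolding u_def by (auto intro!: derivative_eq_intros)
  moreover have "- (K * (of_nat m * u^(m - 1) * (0 - a*1))) / (u^m * u^m)
      = K * (of_nat m * a) / u^Suc m"
  proof (cases m)
    case (Suc n)
    have "u^Suc n * u^Suc n = u^n * u^Suc (Suc n)"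
      by (simp flip: power_add)
    moreover have "u^n \<noteq> 0" using u by simp
    ultimately show ?thesis using u by (simp add: Suc field_simps)
  qed simp
  ultimately show ?thesis by (simp add: u_def)
qed

definition pfrac_deriv :: "(nat \<Rightarrow> real) \<Rightarrow> nat \<Rightarrow> real \<Rightarrow> nat \<Rightarrow> real \<Rightarrow> real" where
  "pfrac_deriv c n a k x = (\<Sum>j<n. c j * a^k * pochhammer (of_nat j) k / (1 - a*x)^(j+k))"

lemma pfrac_deriv_has_real_derivative:
  assumes "a * x \<noteq> 1"
  shows "(pfrac_deriv c n a k has_real_derivative pfrac_deriv c n a (Suc k) x) (at x)"
proof -
  have "((\<lambda>y. \<Sum>j<n. c j * a^k * pochhammer (of_nat j) k / (1 - a*y)^(j+k)) has_real_derivative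
     (\<Sum>j<n. c j * a^k * pochhammer (of_nat j) k * (of_nat (j+k) * a) / (1 - a*x)^Suc (j+k))) (at x)"
    by (intro DERIV_sum has_real_derivative_divide_power_linear assms)
  moreover have "(\<Sum>j<n. c j * a^k * pochhammer (of_nat j) k * (of_nat (j+k) * a) / (1 - a*x)^Suc (j+k))
      = pfrac_deriv c n a (Suc k) x"
    unfolding pfrac_deriv_def by (intro sum.cong refl) (simp add: pochhammer_Suc algebra_simps)
  ultimately show ?thesis by (simp add: pfrac_deriv_def[abs_def])
qed

lemma higher_deriv_pfrac_deriv:
  assumes "a * x \<noteq> 1"
  shows "(deriv ^^ k) (pfrac_deriv c n a 0) x = pfrac_deriv c n a k x"
proof (rule higher_deriv_eqI[where S = "{y. a * y \<noteq> 1}"])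
  show "open {y. a * y \<noteq> (1::real)}"
    by (intro open_Collect_neq continuous_intros)
qed (use assms pfrac_deriv_has_real_derivative in auto)

lemma radius_am_leI:
  assumes "x0 \<le> 0" and "\<And>r. - x0 < r \<Longrightarrow> \<exists>x\<in>{-r..0}. \<not> abs_mono_at P Q x"
  shows "radius_am P Q \<le> ereal (- x0)"
  unfolding radius_am_def
proof (rule Sup_least)
  fix y assume "y \<in> ereal ` {r. r \<ge> 0 \<and> (\<forall>x\<in>{-r..0}. abs_mono_at P Q x)} \<union> {0}"
  then obtain r where y: "y = ereal r" and r: "r = 0 \<or> (\<forall>x\<in>{-r..0}. abs_mono_at P Q x)"
    by (auto simp: zero_ereal_def)
  have "r \<le> - x0"
    using assms r by (metis linorder_not_le neg_0_le_iff_le)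
  then show "y \<le> ereal (- x0)" using y by simp
qed

lemma radius_am_le:
  assumes "x0 \<le> 0" and "\<not> abs_mono_at P Q x0"
  shows "radius_am P Q \<le> ereal (- x0)"
  using assms by (intro radius_am_leI) auto

lemma radius_am_eq:
  assumes "x0 \<le> 0"
    and "\<And>x. x0 \<le> x \<Longrightarrow> x \<le> 0 \<Longrightarrow> abs_mono_at P Q x"
    and "\<And>x. x < x0 \<Longrightarrow> \<not> abs_mono_at P Q x"
  shows "radius_am P Q = ereal (- x0)"
proof (rule antisym)
  show "radius_am P Q \<le> ereal (- x0)"
  proof (rule radius_am_leI[OF assms(1)])
    fix r assume "- x0 < r"
    then have "- r \<in> {-r..0}" and "- r < x0" using assms(1) by auto
    then show "\<exists>x\<in>{-r..0}. \<not> abs_mono_at P Q x" using assms(3) by blast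
  qed
  have "- x0 \<in> {r. r \<ge> 0 \<and> (\<forall>x\<in>{-r..0}. abs_mono_at P Q x)}"
    using assms(1,2) by auto
  then show "ereal (- x0) \<le> radius_am P Q"
    unfolding radius_am_def by (intro Sup_upper) blast
qed

section \<open>The class of order-4 approximations with denominator \<open>(1 - a z)\<^sup>3\<close>\<close>

lemma sum_powers_bounded_imp_coeffs_zero:
  fixes b :: "nat \<Rightarrow> real"
  assumes "eventually (\<lambda>z. \<bar>\<Sum>i<n. b i * z^i\<bar> \<le> c * \<bar>z\<bar>^n) (at (0::real))"
  shows "\<forall>i<n. b i = 0"
  using assms
proof (induction n arbitrary: b c)
  case 0 then show ?case by simp
next
  case (Suc n)
  define g where "g z = (\<Sum>i<n. b (Suc i) * z^i)" for z :: real
  have split: "(\<Sum>i<Suc n. b i * z^i) = b 0 + z * g z" for z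
    unfolding g_def sum.lessThan_Suc_shift by (simp add: sum_distrib_left algebra_simps)
  have lim1: "((\<lambda>z. \<Sum>i<Suc n. b i * z^i) \<longlongrightarrow> b 0) (at (0::real))"
  proof -
    have cg: "(g \<longlongrightarrow> g 0) (at (0::real))" unfolding g_def by (intro tendsto_intros)
    have "((\<lambda>z. b 0 + z * g z) \<longlongrightarrow> b 0 + 0 * g 0) (at (0::real))"
      by (intro tendsto_intros cg)
    then show ?thesis unfolding split by simp
  qed
  have lim2: "((\<lambda>z. \<Sum>i<Suc n. b i * z^i) \<longlongrightarrow> 0) (at (0::real))"
  proof (rule Lim_null_comparison)
    show "eventually (\<lambda>z. norm (\<Sum>i<Suc n. b i * z^i) \<le> c * \<bar>z\<bar>^Suc n) (at (0::real))"
      using Suc.prems by simp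
    have "((\<lambda>z::real. c * \<bar>z\<bar>^Suc n) \<longlongrightarrow> c * \<bar>0\<bar>^Suc n) (at 0)"
      by (intro tendsto_intros)
    then show "((\<lambda>z::real. c * \<bar>z\<bar>^Suc n) \<longlongrightarrow> 0) (at 0)" by simp
  qed
  have b0: "b 0 = 0"
    using tendsto_unique[OF at_neq_bot lim1 lim2] .
  have ev: "eventually (\<lambda>z. \<bar>\<Sum>i<n. b (Suc i) * z^i\<bar> \<le> c * \<bar>z\<bar>^n) (at (0::real))"
  proof -
    have "eventually (\<lambda>z::real. z \<noteq> 0) (at 0)" by (simp add: eventually_at_filter)
    with Suc.prems show ?thesis
    proof eventually_elim
      case (elim z)
      have "\<bar>z\<bar> * \<bar>g z\<bar> \<le> \<bar>z\<bar> * (c * \<bar>z\<bar>^n)"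
        using elim(1) unfolding split b0 by (simp add: abs_mult algebra_simps)
      then have "\<bar>g z\<bar> \<le> c * \<bar>z\<bar>^n" using elim(2)
        by (simp add: mult_le_cancel_left_pos)
      then show ?case by (simp add: g_def)
    qed
  qed
  have "\<forall>i<n. b (Suc i) = 0" using Suc.IH[OF ev] .
  then show ?case using b0 by (auto simp: less_Suc_eq_0_disj)
qed

lemma sum_powers_bigo_at_0_iff:
  fixes b :: "nat \<Rightarrow> real"
  shows "(\<lambda>z. \<Sum>i<n. b i * z^i) \<in> O[at 0](\<lambda>z. z^n) \<longleftrightarrow> (\<forall>i<n. b i = 0)"
proof
  assume "(\<lambda>z. \<Sum>i<n. b i * z^i) \<in> O[at 0](\<lambda>z. z^n)"
  then obtain c where "eventually (\<lambda>z. norm (\<Sum>i<n. b i * z^i) \<le> c * norm (z^n)) (at 0)"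
    by (elim landau_o.bigE) blast
  then show "\<forall>i<n. b i = 0"
    by (intro sum_powers_bounded_imp_coeffs_zero[where c = c]) (simp add: power_abs)
qed simp

lemma ratfun_den_minus_bigo_iff:
  fixes f g :: "real \<Rightarrow> real"
  shows "(\<lambda>z. ratfun P (den a s) z - f z) \<in> O[at 0](g) \<longleftrightarrow>
         (\<lambda>z. poly P z - f z * (1 - a*z)^s) \<in> O[at 0](g)"
proof -
  have "eventually (\<lambda>z. a * z < 1) (at (0::real))"
    by real_asymp
  then have near0: "eventually (\<lambda>z. a * z \<noteq> 1) (at (0::real))"
    by eventually_elim simp
  have den_bounded: "(\<lambda>z. (1 - a*z)^s) \<in> O[at (0::real)](\<lambda>_. 1)"
    and inv_den_bounded: "(\<lambda>z. 1 / (1 - a*z)^s) \<in> O[at (0::real)](\<lambda>_. 1)"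
    by real_asymp+
  have eq1: "eventually (\<lambda>z. (ratfun P (den a s) z - f z) * (1 - a*z)^s
          = poly P z - f z * (1 - a*z)^s) (at 0)"
    and eq2: "eventually (\<lambda>z. (poly P z - f z * (1 - a*z)^s) * (1 / (1 - a*z)^s)
          = ratfun P (den a s) z - f z) (at 0)"
    using near0 by (eventually_elim, simp add: ratfun_den_eq_divide field_simps)+
  show ?thesis
  proof
    assume "(\<lambda>z. ratfun P (den a s) z - f z) \<in> O[at 0](g)"
    from landau_mult_1_trans(7)[OF this den_bounded]
    show "(\<lambda>z. poly P z - f z * (1 - a*z)^s) \<in> O[at 0](g)"
      using landau_o.big.in_cong[OF eq1] by blast
  next
    assume "(\<lambda>z. poly P z - f z * (1 - a*z)^s) \<in> O[at 0](g)"
    from landau_mult_1_trans(7)[OF this inv_den_bounded]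
    show "(\<lambda>z. ratfun P (den a s) z - f z) \<in> O[at 0](g)"
      using landau_o.big.in_cong[OF eq2] by blast
  qed
qed

definition order_cubic :: "real \<Rightarrow> real" where
  "order_cubic a = 24*a^3 - 36*a^2 + 12*a - 1"

text \<open>The Taylor coefficients of order 0, ..., 4 of \<open>e\<^sup>z (1 - a z)\<^sup>3\<close>.\<close>

definition exp_den_coeff :: "real \<Rightarrow> nat \<Rightarrow> real" where
  "exp_den_coeff a i = [1, 1 - 3*a, 1/2 - 3*a + 3*a^2, 1/6 - 3*a/2 + 3*a^2 - a^3,
     1/24 - a/2 + 3*a^2/2 - a^3] ! i"

definition psi_numer :: "real \<Rightarrow> real poly" where
  "psi_numer a = [:1, 1 - 3*a, 1/2 - 3*a + 3*a^2, 1/6 - 3*a/2 + 3*a^2 - a^3:]"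

lemma poly_psi_numer:
  "poly (psi_numer a) x
     = 1 + (1 - 3*a)*x + (1/2 - 3*a + 3*a^2)*x^2 + (1/6 - 3*a/2 + 3*a^2 - a^3)*x^3"
  by (simp add: psi_numer_def algebra_simps power2_eq_square power3_eq_cube)

lemma coeff_psi_numer: "coeff (psi_numer a) i = (if i < 4 then exp_den_coeff a i else 0)"
proof -
  consider "i = 0" | "i = 1" | "i = 2" | "i = 3" | "i \<ge> 4" by linarith
  then show ?thesis
  proof cases
    case 5
    then show ?thesis
      by (simp add: psi_numer_def coeff_pCons split: nat.split)
  qed (simp_all add: psi_numer_def exp_den_coeff_def numeral_eq_Suc)
qed

lemma degree_psi_numer: "degree (psi_numer a) \<le> 3"
  by (rule degree_le) (simp add: coeff_psi_numer)

lemma poly_eq_if_degree_le_3: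
  fixes P :: "real poly"
  assumes "degree P \<le> 3"
  shows "poly P z = coeff P 0 + coeff P 1 * z + coeff P 2 * z^2 + coeff P 3 * z^3"
proof -
  have "poly P z = (\<Sum>i\<le>degree P. coeff P i * z^i)"
    by (simp add: poly_altdef)
  also have "\<dots> = (\<Sum>i\<le>3. coeff P i * z^i)"
    by (rule sum.mono_neutral_left) (use assms in \<open>auto simp: coeff_eq_0\<close>)
  finally show ?thesis
    by (simp add: numeral_eq_Suc atMost_Suc)
qed

lemma exp_den_residual_bigo:
  fixes P :: "real poly"
  assumes "degree P \<le> 3"
  shows "(\<lambda>z. poly P z - exp z * (1 - a*z)^3 - (\<Sum>i<5. (coeff P i - exp_den_coeff a i) * z^i))
           \<in> O[at 0](\<lambda>z. z^5)"
proof -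
  have "coeff P 4 = 0"
    using assms by (simp add: coeff_eq_0)
  then have "poly P z - exp z * (1 - a*z)^3 - (\<Sum>i<5. (coeff P i - exp_den_coeff a i) * z^i)
      = (a/8 - a^2/2 + a^3/2) * z^5 + (a^3/6 - a^2/8) * z^6 + a^3/24 * z^7
        - (exp z - (1 + z + z^2/2 + z^3/6 + z^4/24)) * (1 - a*z)^3" for z
    by (simp add: poly_eq_if_degree_le_3[OF assms] exp_den_coeff_def numeral_eq_Suc)
      (simp add: algebra_simps power2_eq_square power3_eq_cube)
  moreover have "(\<lambda>z::real. (a/8 - a^2/2 + a^3/2) * z^5 + (a^3/6 - a^2/8) * z^6 + a^3/24 * z^7
        - (exp z - (1 + z + z^2/2 + z^3/6 + z^4/24)) * (1 - a*z)^3) \<in> O[at 0](\<lambda>z. z^5)"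
    by real_asymp
  ultimately show ?thesis by simp
qed

lemma Pi_hat_3_4_iff: "(P, a) \<in> Pi_hat 3 4 \<longleftrightarrow> order_cubic a = 0 \<and> P = psi_numer a"
proof -
  let ?r = "\<lambda>z. \<Sum>i<5. (coeff P i - exp_den_coeff a i) * z^i"
  have "(P, a) \<in> Pi_hat 3 4 \<longleftrightarrow>
      degree P \<le> 3 \<and> (\<lambda>z. poly P z - exp z * (1 - a*z)^3) \<in> O[at 0](\<lambda>z. z^5)"
    by (simp add: Pi_hat_def ratfun_den_minus_bigo_iff)
  also have "\<dots> \<longleftrightarrow> degree P \<le> 3 \<and> ?r \<in> O[at 0](\<lambda>z. z^5)"
  proof (intro conj_cong refl)
    let ?f = "\<lambda>z. poly P z - exp z * (1 - a*z)^3"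
    assume "degree P \<le> 3"
    note residual = exp_den_residual_bigo[OF this, of a]
    show "?f \<in> O[at 0](\<lambda>z. z^5) \<longleftrightarrow> ?r \<in> O[at 0](\<lambda>z. z^5)"
    proof
      assume "?f \<in> O[at 0](\<lambda>z. z^5)"
      from sum_in_bigo(2)[OF this residual] show "?r \<in> O[at 0](\<lambda>z. z^5)" by simp
    next
      assume "?r \<in> O[at 0](\<lambda>z. z^5)"
      from sum_in_bigo(1)[OF residual this] show "?f \<in> O[at 0](\<lambda>z. z^5)" by simp
    qed
  qed
  also have "\<dots> \<longleftrightarrow> degree P \<le> 3 \<and> (\<forall>i<5. coeff P i = exp_den_coeff a i)"
    by (simp add: sum_powers_bigo_at_0_iff)
  also have "\<dots> \<longleftrightarrow> order_cubic a = 0 \<and> P = psi_numer a"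
  proof safe
    assume deg: "degree P \<le> 3" and c: "\<forall>i<5. coeff P i = exp_den_coeff a i"
    have "exp_den_coeff a 4 = 0"
      using c deg coeff_eq_0[of P 4] by force
    then show "order_cubic a = 0"
      by (simp add: exp_den_coeff_def order_cubic_def numeral_eq_Suc)
    show "P = psi_numer a"
    proof (rule poly_eqI)
      fix i show "coeff P i = coeff (psi_numer a) i"
        using c deg coeff_eq_0[of P i] by (cases "i < 4") (auto simp: coeff_psi_numer)
    qed
  next
    show "degree (psi_numer a) \<le> 3" by (rule degree_psi_numer)
  next
    fix i :: nat assume "order_cubic a = 0" "i < 5"
    then show "coeff (psi_numer a) i = exp_den_coeff a i"
      by (cases "i < 4") (auto simp: coeff_psi_numer exp_den_coeff_def order_cubic_def
          numeral_eq_Suc less_Suc_eq)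
  qed
  finally show ?thesis .
qed

section \<open>Derivatives of \<open>\<psi>\<^sub>a\<close>\<close>

lemma pochhammer_of_nat_Suc_mult_fact:
  "pochhammer (of_nat (Suc m)) k * fact m = (fact (m + k) :: real)"
proof (induction k)
  case (Suc k)
  have "pochhammer (of_nat (Suc m)) (Suc k) * fact m
      = (pochhammer (of_nat (Suc m)) k * fact m) * (of_nat (Suc m) + of_nat k :: real)"
    by (simp add: pochhammer_Suc ac_simps)
  also have "\<dots> = fact (m + k) * (of_nat (Suc m) + of_nat k)"
    using Suc.IH by simp
  also have "\<dots> = fact (m + Suc k)"
    by (simp add: algebra_simps)
  finally show ?case .
qed simp

definition psi_pf_coeff :: "real \<Rightarrow> nat \<Rightarrow> real" where
  "psi_pf_coeff a j = [-21 + 96*a - 72*a^2, 84 - 384*a + 288*a^2, -114 + 516*a - 384*a^2,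
     52 - 228*a + 168*a^2] ! j"

lemma sum_lessThan_4: "(\<Sum>j<(4::nat). f j) = f 0 + f 1 + f 2 + (f 3 :: real)"
  by (simp add: numeral_eq_Suc)

lemma psi_numer_partial_fractions:
  assumes "order_cubic a = 0"
  shows "poly (psi_numer a) x = (\<Sum>j<4. psi_pf_coeff a j * (1 - a*x)^(3 - j))"
  using assms unfolding poly_psi_numer sum_lessThan_4 psi_pf_coeff_def order_cubic_def
  by (simp add: numeral_eq_Suc) algebra

lemma ratfun_psi_eq_pfrac_deriv:
  assumes "order_cubic a = 0" and "a * x \<noteq> 1"
  shows "ratfun (psi_numer a) (den a 3) x = pfrac_deriv (psi_pf_coeff a) 4 a 0 x"
proof -
  have u: "1 - a*x \<noteq> 0" using assms(2) by simp
  have "ratfun (psi_numer a) (den a 3) x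
      = (\<Sum>j<4. psi_pf_coeff a j * (1 - a*x)^(3 - j) / (1 - a*x)^3)"
    using assms by (simp add: ratfun_den_eq_divide psi_numer_partial_fractions sum_divide_distrib)
  also have "\<dots> = pfrac_deriv (psi_pf_coeff a) 4 a 0 x"
    unfolding pfrac_deriv_def using u
    by (intro sum.cong refl) (auto simp: power_diff field_simps)
  finally show ?thesis .
qed

lemma higher_deriv_ratfun_psi:
  assumes "order_cubic a = 0" and "a * x \<noteq> 1"
  shows "(deriv ^^ k) (ratfun (psi_numer a) (den a 3)) x = pfrac_deriv (psi_pf_coeff a) 4 a k x"
proof -
  have "(deriv ^^ k) (ratfun (psi_numer a) (den a 3)) x
      = (deriv ^^ k) (pfrac_deriv (psi_pf_coeff a) 4 a 0) x"
  proof (rule higher_deriv_cong_open[where S = "{y. a * y \<noteq> 1}"])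
    show "open {y. a * y \<noteq> (1::real)}"
      by (intro open_Collect_neq continuous_intros)
  qed (use assms ratfun_psi_eq_pfrac_deriv in auto)
  also have "\<dots> = pfrac_deriv (psi_pf_coeff a) 4 a k x"
    by (rule higher_deriv_pfrac_deriv[OF assms(2)])
  finally show ?thesis .
qed

definition deriv_factor :: "(nat \<Rightarrow> real) \<Rightarrow> nat \<Rightarrow> real \<Rightarrow> real" where
  "deriv_factor c k w
     = c 1 + c 2 * (of_nat k + 1) * w + c 3 * ((of_nat k + 1) * (of_nat k + 2) / 2) * w^2"

text \<open>For \<open>k \<ge> 1\<close> the term \<open>j = 0\<close> vanishes because \<open>pochhammer 0 k = 0\<close>.\<close>

lemma pfrac_deriv_4_eq:
  assumes "a * x \<noteq> 1" and "k \<noteq> 0"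
  shows "pfrac_deriv c 4 a k x
    = a^k * fact k * (1/(1 - a*x))^(k+1) * deriv_factor c k (1/(1 - a*x))"
proof -
  define w where "w = 1/(1 - a*x)"
  obtain m where k: "k = Suc m" using assms(2) by (cases k) auto
  have inv: "d/(1 - a*x)^n = d * w^n" for d n
    by (simp add: w_def power_one_over divide_inverse power_inverse)
  have p1: "pochhammer 1 (Suc m) = (fact (Suc m) :: real)"
    and p2: "pochhammer 2 (Suc m) = (fact (Suc m) * (of_nat m + 2) :: real)"
    and p3: "pochhammer 3 (Suc m) = (fact (Suc m) * ((of_nat m + 2) * (of_nat m + 3) / 2) :: real)"
    using pochhammer_of_nat_Suc_mult_fact[of 0 "Suc m"] pochhammer_of_nat_Suc_mult_fact[of 1 "Suc m"]
      pochhammer_of_nat_Suc_mult_fact[of 2 "Suc m"]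
    by (simp_all add: eq_divide_eq fact_Suc algebra_simps numeral_eq_Suc)
  have "pfrac_deriv c 4 a (Suc m) x
      = c 1 * a^Suc m * fact (Suc m) * w^(m+2)
        + c 2 * a^Suc m * (fact (Suc m) * (of_nat m + 2)) * w^(m+3)
        + c 3 * a^Suc m * (fact (Suc m) * ((of_nat m + 2) * (of_nat m + 3) / 2)) * w^(m+4)"
    unfolding pfrac_deriv_def sum_lessThan_4 inv
    by (simp add: pochhammer_0_left p1 p2 p3 numeral_eq_Suc)
  also have "\<dots> = a^Suc m * fact (Suc m) * w^(m+2) * deriv_factor c (Suc m) w"
    unfolding deriv_factor_def by (simp add: power_add power2_eq_square power3_eq_cube
        numeral_eq_Suc algebra_simps)
  finally show ?thesis by (simp add: w_def k)
qed

lemma psi_pf_coeff_simps: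
  "psi_pf_coeff a 1 = 84 - 384*a + 288*a^2"
  "psi_pf_coeff a 2 = -114 + 516*a - 384*a^2"
  "psi_pf_coeff a 3 = 52 - 228*a + 168*a^2"
  by (simp_all add: psi_pf_coeff_def numeral_eq_Suc)

lemma quadratic_nonneg_beyond:
  fixes A B C w0 w :: real
  assumes "0 \<le> C" and "w0 \<le> w" and "0 \<le> A + B*w0 + C*w0^2" and "0 \<le> B + 2*C*w0"
  shows "0 \<le> A + B*w + C*w^2"
proof -
  have "A + B*w + C*w^2 = (A + B*w0 + C*w0^2) + (w - w0) * (B + C*(w + w0))"
    by (simp add: algebra_simps power2_eq_square)
  moreover have "C*(2*w0) \<le> C*(w + w0)"
    using assms(1,2) by (intro mult_left_mono) simp_all
  then have "0 \<le> (w - w0) * (B + C*(w + w0))"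
    using assms(2,4) by simp
  ultimately show ?thesis
    using assms(3) by linarith
qed

lemma deriv_factor_nonneg:
  assumes "3929/100 \<le> c 1" "-5388/100 \<le> c 2" "c 2 \<le> 0" "2540/100 \<le> c 3"
    and w: "7/10 \<le> w" and k: "1 \<le> k"
  shows "0 \<le> deriv_factor c k w"
proof -
  define c1 c2 c3 where "c1 = c 1" and "c2 = c 2" and "c3 = c 3"
  have c: "3929/100 \<le> c1" "-5388/100 \<le> c2" "c2 \<le> 0" "2540/100 \<le> c3"
    using assms(1-4) by (simp_all add: c1_def c2_def c3_def)
  have factor: "deriv_factor c k w
      = c1 + (of_nat k + 1) * c2 * w + ((of_nat k + 1) * (of_nat k + 2) / 2) * c3 * w^2"
    by (simp add: deriv_factor_def c1_def c2_def c3_def)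
  consider "k = 1" | "k = 2" | "k = 3" | "k = 4" | "k \<ge> 5" using k by linarith
  then show ?thesis
  proof cases
    case 1
    have square: "3*c3*(c1 + 2*c2*w + 3*c3*w^2) = (3*c3*w + c2)^2 + (3*(c1*c3) - c2^2)"
      by algebra
    have "(3929/100)*(2540/100) \<le> c1*c3" using c by (intro mult_mono) auto
    moreover have "(-c2)^2 \<le> (5388/100)^2" using c by (intro power_mono) auto
    ultimately have "0 < 3*(c1*c3) - c2^2" by (simp add: power2_eq_square)
    then have "0 < 3*c3*(c1 + 2*c2*w + 3*c3*w^2)" unfolding square
      by (metis add_nonneg_pos zero_le_power2)
    then have "0 < c1 + 2*c2*w + 3*c3*w^2" using c by (simp add: zero_less_mult_iff)
    then show ?thesis unfolding factor using 1 by simp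
  next
    case 2
    have "0 \<le> c1 + (3*c2)*w + (6*c3)*w^2"
      by (rule quadratic_nonneg_beyond[OF _ w]) (use c in \<open>simp_all add: power2_eq_square\<close>)
    then show ?thesis unfolding factor using 2 by simp
  next
    case 3
    have "0 \<le> c1 + (4*c2)*w + (10*c3)*w^2"
      by (rule quadratic_nonneg_beyond[OF _ w]) (use c in \<open>simp_all add: power2_eq_square\<close>)
    then show ?thesis unfolding factor using 3 by simp
  next
    case 4
    have "0 \<le> c1 + (5*c2)*w + (15*c3)*w^2"
      by (rule quadratic_nonneg_beyond[OF _ w]) (use c in \<open>simp_all add: power2_eq_square\<close>)
    then show ?thesis unfolding factor using 4 by simp
  next
    case 5
    define K where "K = (of_nat k :: real)"
    have "deriv_factor c k w = c1 + ((K + 1) * w) * (c2 + ((K + 2) / 2) * (c3 * w))"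
      unfolding factor K_def by (simp add: algebra_simps power2_eq_square)
    moreover have "7/2 * (2540/100 * (7/10)) \<le> ((K + 2) / 2) * (c3 * w)"
      using c w 5 by (intro mult_mono) (auto simp: K_def)
    then have "0 \<le> ((K + 1) * w) * (c2 + ((K + 2) / 2) * (c3 * w))"
      using c w by (simp add: K_def)
    ultimately show ?thesis using c by linarith
  qed
qed

lemma psi_numer_strict_mono:
  assumes "order_cubic a = 0" and "0 < 1/8 - a + 3/2*a^2"
    and "0 < 3*(1 - 3*a)*(1/8 - a + 3/2*a^2) - (1/2 - 3*a + 3*a^2)^2"
  shows "strict_mono (poly (psi_numer a))"
proof -
  define q where "q = 1/8 - a + 3/2*a^2"
  have "1/6 - 3*a/2 + 3*a^2 - a^3 = q"
    using assms(1) by (simp add: q_def order_cubic_def)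
  then have deriv: "(poly (psi_numer a) has_real_derivative
      (1 - 3*a) + 2*(1/2 - 3*a + 3*a^2)*t + 3*q*t^2) (at t)" for t
    unfolding poly_psi_numer[abs_def] by (auto intro!: derivative_eq_intros simp: algebra_simps)
  have square: "3*q*((1 - 3*a) + 2*(1/2 - 3*a + 3*a^2)*t + 3*q*t^2)
      = (3*q*t + (1/2 - 3*a + 3*a^2))^2 + (3*(1 - 3*a)*q - (1/2 - 3*a + 3*a^2)^2)" for t
    by algebra
  have "0 < q" and disc: "0 < 3*(1 - 3*a)*q - (1/2 - 3*a + 3*a^2)^2"
    using assms(2,3) by (simp_all add: q_def)
  have "0 < 3*q*((1 - 3*a) + 2*(1/2 - 3*a + 3*a^2)*t + 3*q*t^2)" for t
    unfolding square using disc by (metis add_nonneg_pos zero_le_power2)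
  with \<open>0 < q\<close> have pos: "0 < (1 - 3*a) + 2*(1/2 - 3*a + 3*a^2)*t + 3*q*t^2" for t
    by (simp add: zero_less_mult_iff)
  show ?thesis
  proof (rule strict_monoI)
    fix x y :: real assume "x < y"
    then show "poly (psi_numer a) x < poly (psi_numer a) y"
    proof (rule DERIV_pos_imp_increasing)
      fix t show "\<exists>d. (poly (psi_numer a) has_real_derivative d) (at t) \<and> 0 < d"
        using deriv pos by blast
    qed
  qed
qed

section \<open>Numerical bounds\<close>

lemma power_bounds:
  fixes L U a :: real
  assumes "0 \<le> L" and "L \<le> a" and "a \<le> U"
  shows "L^n \<le> a^n \<and> a^n \<le> U^n"
  using assms by (auto intro: power_mono)

lemma order_cubic_cube: "order_cubic a = 0 \<Longrightarrow> 24*a^3 = 36*a^2 - 12*a + 1"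
  by (simp add: order_cubic_def)

lemma order_cubic_fourth_power: "order_cubic a = 0 \<Longrightarrow> 24*a^4 = 36*a^3 - 12*a^2 + a"
  unfolding order_cubic_def by algebra

lemma isCont_order_cubic: "isCont order_cubic x"
  unfolding order_cubic_def[abs_def] by (intro continuous_intros)

lemma order_cubic_small_root_exists:
  "\<exists>a. 128886/10^6 \<le> a \<and> a \<le> 128887/10^6 \<and> order_cubic a = 0"
proof -
  have "order_cubic (128886/10^6) \<le> 0" "0 \<le> order_cubic (128887/10^6)"
    by (simp_all add: order_cubic_def power2_eq_square power3_eq_cube)
  then show ?thesis
    using IVT[of order_cubic "128886/10^6" 0 "128887/10^6"] isCont_order_cubic by auto
qed

lemma order_cubic_middle_root_exists:
  "\<exists>a. 302534/10^6 \<le> a \<and> a \<le> 302535/10^6 \<and> order_cubic a = 0"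
proof -
  have "order_cubic (302535/10^6) \<le> 0" "0 \<le> order_cubic (302534/10^6)"
    by (simp_all add: order_cubic_def power2_eq_square power3_eq_cube)
  then show ?thesis
    using IVT2[of order_cubic "302535/10^6" 0 "302534/10^6"] isCont_order_cubic by auto
qed

lemma order_cubic_roots_cases:
  assumes "order_cubic a = 0" "order_cubic a1 = 0" "order_cubic a2 = 0" "a1 \<noteq> a2"
  shows "a = a1 \<or> a = a2 \<or> a = 3/2 - a1 - a2"
proof -
  define Q where "Q x y = 24*(x^2 + x*y + y^2) - 36*(x + y) + 12" for x y :: real
  have f: "order_cubic x - order_cubic y = (x - y) * Q x y" for x y
    unfolding order_cubic_def Q_def by algebra
  have g: "Q x y - Q z y = (x - z) * (24*(x + z + y) - 36)" for x y z
    unfolding Q_def by algebra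
  have q2: "Q a2 a1 = 0" using f[of a2 a1] assms by simp
  show ?thesis
  proof (cases "a = a1")
    case False
    then have "Q a a1 = 0" using f[of a a1] assms by simp
    then have "(a - a2) * (24*(a + a2 + a1) - 36) = 0" using g[of a a1 a2] q2 by simp
    then show ?thesis by auto
  qed simp
qed

lemma small_root_numerics:
  assumes "128886/10^6 \<le> a" "a \<le> 128887/10^6" "order_cubic a = 0"
  shows "poly (psi_numer a) (-329/100) < 0" "poly (psi_numer a) (-328/100) > 0"
    "3929/100 \<le> psi_pf_coeff a 1" "-5388/100 \<le> psi_pf_coeff a 2"
    "psi_pf_coeff a 2 \<le> -5387/100" "2540/100 \<le> psi_pf_coeff a 3"
    "0 < 1/8 - a + 3/2*a^2" "0 < 3*(1-3*a)*(1/8 - a + 3/2*a^2) - (1/2 - 3*a + 3*a^2)^2"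
proof -
  note s = power_bounds[OF _ assms(1,2), of 2] power_bounds[OF _ assms(1,2), of 3]
  note r = order_cubic_cube[OF assms(3)] order_cubic_fourth_power[OF assms(3)]
  have e1: "poly (psi_numer a) (-329/100) = -16878989/6000000 + 61629267/2000000*a
      - 74361567/1000000*a^2 + 35611289/1000000*a^3"
    unfolding poly_psi_numer by (simp add: field_simps power2_eq_square power3_eq_cube)
  have e2: "poly (psi_numer a) (-328/100) = -130409/46875 + 476502/15625*a
      - 1149804/15625*a^2 + 551368/15625*a^3"
    unfolding poly_psi_numer by (simp add: field_simps power2_eq_square power3_eq_cube)
  have e3: "3*(1-3*a)*(1/8 - a + 3/2*a^2) - (1/2 - 3*a + 3*a^2)^2
      = 1/8 - 9/8*a + 3/2*a^2 + 9/2*a^3 - 9*a^4"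
    by (simp add: field_simps power2_eq_square power3_eq_cube power4_eq_xxxx)
  show "poly (psi_numer a) (-329/100) < 0"
    unfolding e1 using s r by (simp add: power2_eq_square power3_eq_cube power4_eq_xxxx)
  show "poly (psi_numer a) (-328/100) > 0"
    unfolding e2 using s r by (simp add: power2_eq_square power3_eq_cube power4_eq_xxxx)
  show "3929/100 \<le> psi_pf_coeff a 1" "-5388/100 \<le> psi_pf_coeff a 2"
    "psi_pf_coeff a 2 \<le> -5387/100" "2540/100 \<le> psi_pf_coeff a 3"
    using s assms unfolding psi_pf_coeff_simps by (simp_all add: power2_eq_square power3_eq_cube)
  show "0 < 1/8 - a + 3/2*a^2"
    using s assms by (simp add: power2_eq_square power3_eq_cube)
  show "0 < 3*(1-3*a)*(1/8 - a + 3/2*a^2) - (1/2 - 3*a + 3*a^2)^2"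
    unfolding e3 using s r assms by (simp add: power2_eq_square power3_eq_cube power4_eq_xxxx)
qed

lemma middle_root_numerics:
  assumes "302534/10^6 \<le> a" "a \<le> 302535/10^6"
  shows "psi_pf_coeff a 1 + 21 * psi_pf_coeff a 2 + 231 * psi_pf_coeff a 3 < 0"
  using power_bounds[OF _ assms, of 2] assms unfolding psi_pf_coeff_simps
  by (simp add: power2_eq_square)

lemma large_root_numerics:
  assumes "1068578/10^6 \<le> a" "a \<le> 1068580/10^6" "order_cubic a = 0"
  shows "psi_pf_coeff a 1 * (1+a)^2 + 11 * psi_pf_coeff a 2 * (1+a) + 66 * psi_pf_coeff a 3 < 0"
proof -
  note s = power_bounds[OF _ assms(1,2), of 2] power_bounds[OF _ assms(1,2), of 3]
  note r = order_cubic_cube[OF assms(3)] order_cubic_fourth_power[OF assms(3)]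
  have e: "psi_pf_coeff a 1 * (1+a)^2 + 11 * psi_pf_coeff a 2 * (1+a) + 66 * psi_pf_coeff a 3
      = 2262 - 10842*a + 12144*a^2 - 4032*a^3 + 288*a^4"
    unfolding psi_pf_coeff_simps
    by (simp add: field_simps power2_eq_square power3_eq_cube power4_eq_xxxx)
  show ?thesis
    unfolding e using s r assms by (simp add: power2_eq_square power3_eq_cube power4_eq_xxxx)
qed

text \<open>\<open>res_poly\<close> is the resultant with respect to \<open>a\<close> of \<open>order_cubic a\<close> and
  \<open>poly (psi_numer a) x\<close>; see \<open>res_poly_root\<close>.\<close>

definition res_poly :: "real \<Rightarrow> real" where
  "res_poly y = y^9 + 12*y^8 + 60*y^7 + 120*y^6 - 144*y^5 - 1152*y^4 - 1536*y^3
     + 1152*y^2 + 2304*y - 1536"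

definition res_poly_deriv :: "real \<Rightarrow> real" where
  "res_poly_deriv y = 9*y^8 + 96*y^7 + 420*y^6 + 720*y^5 - 720*y^4 - 4608*y^3 - 4608*y^2
     + 2304*y + 2304"

text \<open>Taylor expansions at \<open>-3.29\<close>; the signs below follow from them by linear arithmetic.\<close>

lemma res_poly_shift:
  "res_poly (-329/100 - s) = - 7271529773486057369/1000000000000000000
     - 26884236869746544649/10000000000000000 * s - 152790092224717281/25000000000000 * s^2
     - 1526365765818741/250000000000 * s^3 - 21180739654887/5000000000 * s^4
     - 97854176703/50000000 * s^5 - 154062669/250000 * s^6 - 334569/2500 * s^7
     - 1761/100 * s^8 - s^9"
  unfolding res_poly_def by algebra

lemma res_poly_deriv_shift:
  "res_poly_deriv (-329/100 + s) = 26884236869746544649/10000000000000000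
     - 152790092224717281/12500000000000 * s + 4579097297456223/250000000000 * s^2
     - 21180739654887/1250000000 * s^3 + 97854176703/10000000 * s^4
     - 462188007/125000 * s^5 + 2341983/2500 * s^6 - 3522/25 * s^7 + 9 * s^8"
  unfolding res_poly_deriv_def by algebra

lemma res_poly_neg:
  assumes "y \<le> -329/100"
  shows "res_poly y < 0"
proof -
  define s where "s = -329/100 - y"
  have s0: "0 \<le> s" using assms by (simp add: s_def)
  have y: "y = -329/100 - s" by (simp add: s_def)
  have p: "0 \<le> s^2" "0 \<le> s^3" "0 \<le> s^4" "0 \<le> s^5" "0 \<le> s^6" "0 \<le> s^7" "0 \<le> s^8" "0 \<le> s^9"
    using s0 by simp_all
  show ?thesis unfolding y res_poly_shift using s0 p by linarith
qed

lemma res_poly_deriv_pos: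
  assumes "-329/100 \<le> y" "y \<le> -328/100"
  shows "res_poly_deriv y > 0"
proof -
  define s where "s = y + 329/100"
  have s0: "0 \<le> s" "s \<le> 1/100" using assms by (simp_all add: s_def)
  have y: "y = -329/100 + s" by (simp add: s_def)
  have p: "0 \<le> s^n" "s^n \<le> (1/100)^n" for n
    using s0 by (simp_all add: power_mono)
  have v: "(1/100::real)^2 = 1/10000" "(1/100::real)^3 = 1/1000000"
    "(1/100::real)^4 = 1/100000000" "(1/100::real)^5 = 1/10000000000"
    "(1/100::real)^6 = 1/1000000000000" "(1/100::real)^7 = 1/100000000000000"
    "(1/100::real)^8 = 1/10000000000000000"
    by (simp_all add: power_one_over)
  note pp = p[of 2] p[of 3] p[of 4] p[of 5] p[of 6] p[of 7] p[of 8]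
  show ?thesis unfolding y res_poly_deriv_shift using s0 pp v by linarith
qed

lemma has_real_derivative_res_poly: "(res_poly has_real_derivative res_poly_deriv y) (at y)"
  unfolding res_poly_def[abs_def] res_poly_deriv_def
  by (auto intro!: derivative_eq_intros simp: algebra_simps)

lemma res_poly_less:
  assumes "-329/100 \<le> x" "x < y" "y \<le> -328/100"
  shows "res_poly x < res_poly y"
  by (rule DERIV_pos_imp_increasing[OF assms(2)])
     (use assms res_poly_deriv_pos has_real_derivative_res_poly in \<open>force\<close>)

lemma res_poly_root: "order_cubic a = 0 \<Longrightarrow> poly (psi_numer a) x = 0 \<Longrightarrow> res_poly x = 0"
  unfolding order_cubic_def poly_psi_numer res_poly_def by algebra

section \<open>The radii of the three members\<close>

lemma not_abs_mono_at_if_deriv_neg: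
  "(deriv ^^ k) (ratfun P Q) x < 0 \<Longrightarrow> \<not> abs_mono_at P Q x"
  unfolding abs_mono_at_def by (meson not_le)

lemma abs_mono_at_psi_small_root:
  assumes a: "128886/10^6 \<le> a" "a \<le> 128887/10^6" "order_cubic a = 0"
    and xi: "poly (psi_numer a) xi = 0" "xi \<le> x" "x \<le> 0" "-329/100 \<le> xi"
  shows "abs_mono_at (psi_numer a) (den a 3) x"
  unfolding abs_mono_at_def
proof (intro conjI allI)
  note numerics = small_root_numerics[OF a]
  have "0 < a" using a(1) by simp
  have "a * (-329/100) \<le> a * x"
    using \<open>0 < a\<close> xi by (intro mult_left_mono) auto
  moreover have "a * x \<le> 0"
    using \<open>0 < a\<close> xi by (simp add: mult_le_0_iff)
  ultimately have ax: "a * x \<noteq> 1" and u: "0 < 1 - a*x" and w: "7/10 \<le> 1/(1 - a*x)"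
    using a(2) by (simp_all add: le_divide_eq)
  show "\<not> is_pole (psi_numer a) (den a 3) x"
    using ax by (simp add: not_is_pole_if_poly_nonzero poly_den)
  fix k
  show "0 \<le> (deriv ^^ k) (ratfun (psi_numer a) (den a 3)) x"
  proof (cases k)
    case 0
    have "0 \<le> poly (psi_numer a) x"
      using xi psi_numer_strict_mono[OF a(3) numerics(7,8)]
      by (metis order.order_iff_strict strict_mono_less_eq)
    then show ?thesis using 0 u by (simp add: ratfun_den_eq_divide[OF ax])
  next
    case (Suc m)
    have "0 \<le> deriv_factor (psi_pf_coeff a) k (1/(1 - a*x))"
      using numerics w Suc by (intro deriv_factor_nonneg) auto
    then have "0 \<le> pfrac_deriv (psi_pf_coeff a) 4 a k x"
      using \<open>0 < a\<close> u Suc by (simp add: pfrac_deriv_4_eq[OF ax])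
    then show ?thesis
      by (simp only: higher_deriv_ratfun_psi[OF a(3) ax])
  qed
qed

lemma not_abs_mono_at_psi_small_root:
  assumes a: "128886/10^6 \<le> a" "a \<le> 128887/10^6" "order_cubic a = 0"
    and xi: "poly (psi_numer a) xi = 0" "x < xi"
  shows "\<not> abs_mono_at (psi_numer a) (den a 3) x"
proof (rule not_abs_mono_at_if_deriv_neg[of 0])
  note mono = psi_numer_strict_mono[OF a(3) small_root_numerics(7,8)[OF a]]
  have "xi < -328/100"
    using mono small_root_numerics(2)[OF a] xi(1) by (metis not_less strict_mono_less_eq)
  then have "a * x < 0"
    using a(1) xi(2) by (simp add: mult_pos_neg)
  moreover have "poly (psi_numer a) x < 0"
    using mono xi by (metis strict_mono_less)
  ultimately show "(deriv ^^ 0) (ratfun (psi_numer a) (den a 3)) x < 0"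
    by (simp add: ratfun_den_eq_divide divide_neg_pos)
qed

lemma radius_am_psi_small_root:
  assumes a: "128886/10^6 \<le> a" "a \<le> 128887/10^6" "order_cubic a = 0"
    and xi: "poly (psi_numer a) xi = 0" "-329/100 \<le> xi" "xi \<le> 0"
  shows "radius_am (psi_numer a) (den a 3) = ereal (- xi)"
  using assms abs_mono_at_psi_small_root not_abs_mono_at_psi_small_root by (intro radius_am_eq) auto

lemma not_abs_mono_at_psi_middle_root:
  assumes "302534/10^6 \<le> a" "a \<le> 302535/10^6" "order_cubic a = 0"
  shows "\<not> abs_mono_at (psi_numer a) (den a 3) 0"
proof (rule not_abs_mono_at_if_deriv_neg[of 20])
  have "0 < a" using assms(1) by simp
  have "deriv_factor (psi_pf_coeff a) 20 1 < 0"
    using middle_root_numerics[OF assms(1,2)] by (simp add: deriv_factor_def)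
  then have "a^20 * fact 20 * deriv_factor (psi_pf_coeff a) 20 1 < 0"
    using \<open>0 < a\<close> by (intro mult_pos_neg) simp_all
  also have "a^20 * fact 20 * deriv_factor (psi_pf_coeff a) 20 1
      = pfrac_deriv (psi_pf_coeff a) 4 a 20 0"
    using pfrac_deriv_4_eq[of a 0 20 "psi_pf_coeff a"] by simp
  also have "\<dots> = (deriv ^^ 20) (ratfun (psi_numer a) (den a 3)) 0"
    by (rule higher_deriv_ratfun_psi[OF assms(3), symmetric]) simp
  finally show "(deriv ^^ 20) (ratfun (psi_numer a) (den a 3)) 0 < 0" .
qed

lemma not_abs_mono_at_psi_large_root:
  assumes "1068578/10^6 \<le> a" "a \<le> 1068580/10^6" "order_cubic a = 0"
  shows "\<not> abs_mono_at (psi_numer a) (den a 3) (-1)"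
proof (rule not_abs_mono_at_if_deriv_neg[of 10])
  have "0 < a" using assms(1) by simp
  define u where "u = 1 + a"
  have "0 < u" using \<open>0 < a\<close> by (simp add: u_def)
  have "deriv_factor c 10 w = c 1 + 11 * c 2 * w + 66 * c 3 * w^2" for c w
    by (simp add: deriv_factor_def)
  then have "u^2 * deriv_factor (psi_pf_coeff a) 10 (1/u)
      = psi_pf_coeff a 1 * u^2 + 11 * psi_pf_coeff a 2 * u + 66 * psi_pf_coeff a 3"
    using \<open>0 < u\<close> by (simp add: power2_eq_square algebra_simps)
  then have "u^2 * deriv_factor (psi_pf_coeff a) 10 (1/u) < 0"
    using large_root_numerics[OF assms] by (simp add: u_def)
  then have "deriv_factor (psi_pf_coeff a) 10 (1/u) < 0"
    using \<open>0 < u\<close> by (simp add: mult_less_0_iff)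
  then have "a^10 * fact 10 * (1/u)^11 * deriv_factor (psi_pf_coeff a) 10 (1/u) < 0"
    using \<open>0 < a\<close> \<open>0 < u\<close> by (intro mult_pos_neg) simp_all
  also have "a^10 * fact 10 * (1/u)^11 * deriv_factor (psi_pf_coeff a) 10 (1/u)
      = pfrac_deriv (psi_pf_coeff a) 4 a 10 (-1)"
  proof -
    have "1 - a * (-1) = u" by (simp add: u_def)
    then show ?thesis
      using \<open>0 < a\<close> pfrac_deriv_4_eq[of a "-1" 10 "psi_pf_coeff a"] by simp
  qed
  also have "\<dots> = (deriv ^^ 10) (ratfun (psi_numer a) (den a 3)) (-1)"
    using \<open>0 < a\<close> by (intro higher_deriv_ratfun_psi[OF assms(3), symmetric]) simp
  finally show "(deriv ^^ 10) (ratfun (psi_numer a) (den a 3)) (-1) < 0" .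
qed

lemma R_hat_3_4_eq:
  assumes a1: "128886/10^6 \<le> a1" "a1 \<le> 128887/10^6" "order_cubic a1 = 0"
    and xi: "poly (psi_numer a1) xi = 0" "-329/100 \<le> xi" "xi \<le> -328/100"
  shows "R_hat 3 4 = ereal (- xi)"
proof -
  let ?radii = "(\<lambda>(P, a). radius_am P (den a 3)) ` Pi_hat 3 4"
  have radius1: "radius_am (psi_numer a1) (den a1 3) = ereal (- xi)"
    using xi by (intro radius_am_psi_small_root[OF a1]) auto
  obtain a2 where a2: "302534/10^6 \<le> a2" "a2 \<le> 302535/10^6" "order_cubic a2 = 0"
    using order_cubic_middle_root_exists by blast
  have "y \<le> ereal (- xi)" if "y \<in> ?radii" for y
  proof -
    from that obtain a where a: "order_cubic a = 0" and y: "y = radius_am (psi_numer a) (den a 3)"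
      by (auto simp: Pi_hat_3_4_iff)
    from order_cubic_roots_cases[OF a a1(3) a2(3)] a1 a2
    consider "a = a1" | "a = a2" | "a = 3/2 - a1 - a2"
      by force
    then show ?thesis
    proof cases
      case 2
      then have "y \<le> ereal (- 0)"
        unfolding y using a2 by (intro radius_am_le not_abs_mono_at_psi_middle_root) auto
      then show ?thesis using xi by (simp add: order_trans)
    next
      case 3
      then have "y \<le> ereal (- (-1))"
        unfolding y using a a1 a2 by (intro radius_am_le not_abs_mono_at_psi_large_root) auto
      then show ?thesis using xi by (simp add: order_trans)
    qed (use y radius1 in simp)
  qed
  moreover have "(psi_numer a1, a1) \<in> Pi_hat 3 4"
    using a1 by (simp add: Pi_hat_3_4_iff)
  then have "ereal (- xi) \<in> ?radii"
    unfolding radius1[symmetric] by (rule rev_image_eqI) simp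
  ultimately show ?thesis
    unfolding R_hat_def by (intro Sup_eqI) auto
qed

lemma psi_numer_small_root_zero_exists:
  assumes "128886/10^6 \<le> a" "a \<le> 128887/10^6" "order_cubic a = 0"
  shows "\<exists>xi. -329/100 \<le> xi \<and> xi \<le> -328/100 \<and> poly (psi_numer a) xi = 0"
proof (rule IVT)
  show "poly (psi_numer a) (-329/100) \<le> 0" "0 \<le> poly (psi_numer a) (-328/100)"
    using small_root_numerics(1,2)[OF assms] by simp_all
qed (simp_all add: poly_isCont)

lemma least_res_poly_root:
  assumes "res_poly xs = 0" and "\<forall>y. res_poly y = 0 \<longrightarrow> xs \<le> y"
    and "res_poly xi = 0" "-329/100 \<le> xi" "xi \<le> -328/100"
  shows "xs = xi"
proof (rule ccontr)
  assume "xs \<noteq> xi"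
  with assms(2,3) have "xs < xi" by force
  moreover have "-329/100 < xs"
    using assms(1) res_poly_neg[of xs] by linarith
  ultimately have "res_poly xs < res_poly xi"
    using assms(5) by (intro res_poly_less) simp_all
  then show False using assms(1,3) by simp
qed

theorem mainTheorem17:
  fixes xs :: real
  assumes "xs^9 + 12*xs^8 + 60*xs^7 + 120*xs^6 - 144*xs^5 - 1152*xs^4 - 1536*xs^3
           + 1152*xs^2 + 2304*xs - 1536 = 0"
    and "\<forall>y::real. y^9 + 12*y^8 + 60*y^7 + 120*y^6 - 144*y^5 - 1152*y^4 - 1536*y^3
           + 1152*y^2 + 2304*y - 1536 = 0 \<longrightarrow> xs \<le> y"
  shows "R_hat 3 4 = ereal (- xs)"
proof -
  obtain a1 where a1: "128886/10^6 \<le> a1" "a1 \<le> 128887/10^6" "order_cubic a1 = 0"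
    using order_cubic_small_root_exists by blast
  then obtain xi where xi: "-329/100 \<le> xi" "xi \<le> -328/100" "poly (psi_numer a1) xi = 0"
    using psi_numer_small_root_zero_exists by blast
  have "xs = xi"
  proof (rule least_res_poly_root)
    show "res_poly xs = 0" and "\<forall>y. res_poly y = 0 \<longrightarrow> xs \<le> y"
      using assms unfolding res_poly_def by simp_all
  qed (use xi res_poly_root[OF a1(3) xi(3)] in simp_all)
  then show ?thesis
    using R_hat_3_4_eq[OF a1 xi(3,1,2)] by simp
qed

end
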